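(* For any subsets $I,J\subseteq\{1,\dots,n\}$, there are signs $\epsilon(I,J,R)\in\{\pm1\}$ such that \[ \beta(e_I,e_J)=2^{|I\cap J|}\sum_{R\subseteq I\Delta J}\epsilon(I,J,R)\, e_{I\cap J}\wedge e_R\wedge f_{I^c\cap J^c}\wedge f_R , \] where $I\Delta J=(I\setminus J)\cup(J\setminus I)$ and $I^c$ denotes the complement of $I$ in $\{1,\dots,n\}$.
   Context: Let $V$ be a complex vector space of dimension $2n$ with a nondegenerate symmetric bilinear form $q$, and $V=E\oplus F$ with $E,F$ maximal isotropic, with bases $e_1,\dots,e_n$ of $E$ and $f_1,\dots,f_n$ of $F$ such that $q(e_i,f_j)=\delta_{ij}$. For $v\in V$ let $o(v)$ be exterior multiplication by $v$ on $\wedge V$ and $i(v)$ the contraction $i(v)(v_1\wedge\cdots\wedge v_k)=\sum_j(-1)^{j-1}q(v,v_j)v_1\wedge\cdots\widehat{v_j}\cdots\wedge v_k$; set $\psi(v)=o(v)+i(v)$. The Clifford algebra $Cl(V)$ is the tensor algebra of $V$ modulo $v\otimes w+w\otimes v=2q(v,w)1$; $\psi$ extends to an algebra map $Cl(V)\to\mathrm{End}(\wedge V)$ and $\theta:Cl(V)\to\wedge V$, $x\mapsto\psi(x)\cdot 1$, is a linear isomorphism; we identify $Cl(V)$ with $\wedge V$ through $\theta$. In particular $Cl(E)\subset Cl(V)$ is identified with $\wedge E$ (a product $e_{i_1}\cdots e_{i_k}$ of distinct basis vectors of $E$ corresponds to $e_{i_1}\wedge\cdots\wedge e_{i_k}$).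 For $I=\{i_1<\dots<i_k\}$ write $e_I=e_{i_1}\wedge\cdots\wedge e_{i_k}$, $f_I=f_{i_1}\wedge\cdots\wedge f_{i_k}$ (equal to the corresponding Clifford products). Let $f=f_1f_2\cdots f_n\in Cl(V)$, and let $\alpha$ be the main anti-automorphism of $Cl(V)$, the unique algebra anti-automorphism restricting to the identity on $V$ (so $\alpha(v_1\cdots v_r)=v_r\cdots v_1$). For $u,v\in\wedge E\subset Cl(V)$ define $\beta(u,v)=\theta(u\,f\,\alpha(v))\in\wedge V$. *)

theory Defs
  imports Complex_Main
begin

text \<open>The exterior algebra \<wedge>V is modelled by coefficient functions on the standard
  monomial basis: the pair (A,B) of index sets stands for e_A \<wedge> f_B
  (e's in increasing order, followed by f's in increasing order).\<close>

datatype gen = E nat | F nat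

fun gless :: "gen \<Rightarrow> gen \<Rightarrow> bool" where
  "gless (E a) (E b) = (a < b)"
| "gless (E a) (F b) = True"
| "gless (F a) (E b) = False"
| "gless (F a) (F b) = (a < b)"

type_synonym mv = "nat set \<times> nat set \<Rightarrow> complex"

definition mono :: "nat set \<Rightarrow> nat set \<Rightarrow> mv" where
  "mono A B = (\<lambda>S. if S = (A, B) then 1 else 0)"

fun q :: "gen \<Rightarrow> gen \<Rightarrow> complex" where
  "q (E i) (F j) = (if i = j then 1 else 0)"
| "q (F i) (E j) = (if i = j then 1 else 0)"
| "q _ _ = 0"

definition inversions :: "gen list \<Rightarrow> nat" where
  "inversions ws = card {(i, j). i < j \<and> j < length ws \<and> gless (ws ! j) (ws ! i)}"

definition wedge_list :: "gen list \<Rightarrow> mv" where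
  "wedge_list ws = (if distinct ws
     then (\<lambda>S. (-1) ^ inversions ws * mono {a. E a \<in> set ws} {b. F b \<in> set ws} S)
     else (\<lambda>S. 0))"

definition gens :: "nat set \<Rightarrow> nat set \<Rightarrow> gen list" where
  "gens A B = map E (sorted_list_of_set A) @ map F (sorted_list_of_set B)"

definition idx :: "nat \<Rightarrow> (nat set \<times> nat set) set" where
  "idx n = Pow {1..n} \<times> Pow {1..n}"

definition ext_op :: "nat \<Rightarrow> gen \<Rightarrow> mv \<Rightarrow> mv" where
  "ext_op n g x = (\<lambda>S. \<Sum>T\<in>idx n. x T * wedge_list (g # gens (fst T) (snd T)) S)"

text \<open>Contraction i(g):
  i(v)(v_1\<wedge>...\<wedge>v_k) = \<Sum>_j (-1)^(j-1) q(v,v_j) v_1\<wedge>..(omit v_j)..\<wedge>v_k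
  (indices below are 0-based), extended linearly.\<close>
definition contr_word :: "gen \<Rightarrow> gen list \<Rightarrow> mv" where
  "contr_word g ws = (\<lambda>S. \<Sum>j<length ws.
      (-1) ^ j * q g (ws ! j) * wedge_list (take j ws @ drop (Suc j) ws) S)"

definition contr_op :: "nat \<Rightarrow> gen \<Rightarrow> mv \<Rightarrow> mv" where
  "contr_op n g x = (\<lambda>S. \<Sum>T\<in>idx n. x T * contr_word g (gens (fst T) (snd T)) S)"

definition psi :: "nat \<Rightarrow> gen \<Rightarrow> mv \<Rightarrow> mv" where
  "psi n g x = (\<lambda>S. ext_op n g x S + contr_op n g x S)"

definition theta_word :: "nat \<Rightarrow> gen list \<Rightarrow> mv" where
  "theta_word n ws = foldr (psi n) ws (mono {} {})"

definition eword :: "nat set \<Rightarrow> gen list" where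
  "eword I = map E (sorted_list_of_set I)"

definition fword :: "nat \<Rightarrow> gen list" where
  "fword n = map F [1..<Suc n]"

definition alpha_word :: "gen list \<Rightarrow> gen list" where
  "alpha_word ws = rev ws"

definition beta :: "nat \<Rightarrow> nat set \<Rightarrow> nat set \<Rightarrow> mv" where
  "beta n I J = theta_word n (eword I @ fword n @ alpha_word (eword J))"

end

theory Submission
  imports Defs
begin

(*
  Every intermediate result is, up to a global sign, a sum of wedges of "block words": words
  that are concatenations of blocks, block k containing only generators E k, F k.  On such a
  word psi(g) with g = E k or F k acts locally on block k: exterior multiplication inserts g
  into block k (moving it across the preceding blocks costs a sign), and the contraction only
  sees the partner of g inside block k.  Hence each step either rewrites block k, or splits a
  term into two (a free choice, recorded by a set of indices), or merges two equal terms
  (producing the factor 2).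

  The three phases follow: alpha(e_J) spans an isotropic subspace, so theta gives its
  wedge; f_n, ..., f_1 turn it into a sum over subsets of J; e_I yields 2^|I \<inter> J| times a
  sum over subsets of I \<Delta> J.  Finally each final block word is a permutation of the
  monomial in the theorem, which gives the signs epsilon(I, J, R).
*)


fun gen_index :: "gen \<Rightarrow> nat" where
  "gen_index (E a) = a"
| "gen_index (F a) = a"

definition smaller_count :: "gen \<Rightarrow> gen list \<Rightarrow> nat" where
  "smaller_count g xs = length (filter (\<lambda>y. gless y g) xs)"

lemma gless_irrefl [simp]: "\<not> gless g g"
  by (cases g) auto

lemma gless_asym: "gless a b \<Longrightarrow> \<not> gless b a"
  by (cases a; cases b) auto

lemma gless_total: "a \<noteq> b \<Longrightarrow> gless a b \<or> gless b a"
  by (cases a; cases b) auto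

lemma q_other_index: "gen_index x \<noteq> gen_index g \<Longrightarrow> q g x = 0"
  by (cases g; cases x) auto

lemma inversions_Nil [simp]: "inversions [] = 0"
  by (simp add: inversions_def)

lemma inversions_Cons: "inversions (x # xs) = smaller_count x xs + inversions xs"
proof -
  let ?P = "{(i, j). i < j \<and> j < length (x#xs) \<and> gless ((x#xs) ! j) ((x#xs) ! i)}"
  let ?Q = "{(i, j). i < j \<and> j < length xs \<and> gless (xs ! j) (xs ! i)}"
  let ?A = "{j. j < length xs \<and> gless (xs ! j) x}"
  have eq: "?P = (\<lambda>j. (0, Suc j)) ` ?A \<union> (\<lambda>(i,j). (Suc i, Suc j)) ` ?Q"
  proof (rule set_eqI, rule iffI)
    fix p assume "p \<in> ?P"
    then obtain i j where p: "p = (i,j)" "i < j" "j < length (x#xs)"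
        "gless ((x#xs) ! j) ((x#xs) ! i)" by auto
    then obtain j' where j': "j = Suc j'" by (cases j) auto
    show "p \<in> (\<lambda>j. (0, Suc j)) ` ?A \<union> (\<lambda>(i,j). (Suc i, Suc j)) ` ?Q"
    proof (cases i)
      case 0 then show ?thesis using p j' by auto
    next
      case (Suc i') then have "(i', j') \<in> ?Q" using p j' by auto
      then show ?thesis using p j' Suc by (auto simp: image_iff)
    qed
  qed auto
  have fin: "finite ?A" "finite ?Q"
    by (auto intro: finite_subset[of _ "{..<length xs} \<times> {..<length xs}"])
  have "card ?P = card ((\<lambda>j. (0::nat, Suc j)) ` ?A) + card ((\<lambda>(i,j). (Suc i, Suc j)) ` ?Q)"
    unfolding eq by (rule card_Un_disjoint) (use fin in auto)
  also have "\<dots> = card ?A + card ?Q"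
    by (subst card_image, simp add: inj_on_def, subst card_image) (auto simp: inj_on_def)
  finally show ?thesis
    unfolding inversions_def smaller_count_def length_filter_conv_card by simp
qed

lemma inversions_swap:
  "gless a b \<Longrightarrow> inversions (u @ b # a # v) = Suc (inversions (u @ a # b # v))"
  by (induction u) (simp_all add: inversions_Cons smaller_count_def gless_asym)

lemma inversions_sorted: "sorted_wrt gless xs \<Longrightarrow> inversions xs = 0"
proof (induction xs)
  case (Cons x xs)
  then have "smaller_count x xs = 0"
    by (auto simp: smaller_count_def filter_empty_conv dest: gless_asym)
  with Cons show ?case by (simp add: inversions_Cons)
qed simp

lemma smaller_count_set_eq:
  "distinct xs \<Longrightarrow> distinct ys \<Longrightarrow> set xs = set ys \<Longrightarrow> smaller_count g xs = smaller_count g ys"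
  by (simp add: smaller_count_def distinct_length_filter)

lemma smaller_count_nth:
  assumes "sorted_wrt gless xs" "p < length xs"
  shows "smaller_count (xs ! p) xs = p"
proof -
  have xs: "xs = take p xs @ xs ! p # drop (Suc p) xs"
    using assms(2) by (simp add: id_take_nth_drop)
  have s: "sorted_wrt gless (take p xs @ xs ! p # drop (Suc p) xs)" using assms(1) xs by simp
  have "filter (\<lambda>y. gless y (xs ! p)) (take p xs) = take p xs"
    using s by (auto simp: sorted_wrt_append)
  moreover have "filter (\<lambda>y. gless y (xs ! p)) (drop (Suc p) xs) = []"
    using s by (auto simp: sorted_wrt_append filter_empty_conv dest: gless_asym)
  ultimately have "filter (\<lambda>y. gless y (xs ! p)) xs = take p xs"
    by (subst xs) simp
  then show ?thesis using assms(2) by (simp add: smaller_count_def)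
qed

lemma neg_one_power_square: "(-1::complex) ^ n * (-1) ^ n = 1"
  by (simp flip: power_add add: mult_2[symmetric])


definition e_indices :: "gen list \<Rightarrow> nat set" where "e_indices ws = {a. E a \<in> set ws}"
definition f_indices :: "gen list \<Rightarrow> nat set" where "f_indices ws = {b. F b \<in> set ws}"

definition in_range :: "nat \<Rightarrow> gen list \<Rightarrow> bool" where
  "in_range N ws \<longleftrightarrow> (\<forall>x\<in>set ws. gen_index x \<in> {1..N})"

lemma set_by_indices: "set ws = E ` e_indices ws \<union> F ` f_indices ws"
proof (rule set_eqI)
  fix x show "x \<in> set ws \<longleftrightarrow> x \<in> E ` e_indices ws \<union> F ` f_indices ws"
    by (cases x) (auto simp: e_indices_def f_indices_def)
qed

lemma in_range_idx: "in_range N ws \<Longrightarrow> (e_indices ws, f_indices ws) \<in> idx N"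
  by (force simp: in_range_def idx_def e_indices_def f_indices_def)

lemma finite_idx [simp]: "finite (idx N)"
  by (simp add: idx_def)

lemma idx_finite: "(A, B) \<in> idx N \<Longrightarrow> finite A \<and> finite B"
  by (auto simp: idx_def intro: finite_subset)

lemma wedge_distinct:
  "distinct ws \<Longrightarrow> wedge_list ws = (\<lambda>S. (-1) ^ inversions ws * Defs.mono (e_indices ws) (f_indices ws) S)"
  by (simp add: wedge_list_def e_indices_def f_indices_def)

lemma wedge_nondistinct: "\<not> distinct ws \<Longrightarrow> wedge_list ws = (\<lambda>S. 0)"
  by (simp add: wedge_list_def)

lemma gens_distinct: "finite A \<Longrightarrow> finite B \<Longrightarrow> distinct (gens A B)"
  by (auto simp: gens_def distinct_map inj_on_def)

lemma gens_sorted: "sorted_wrt gless (gens A B)"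
proof -
  have "sorted_wrt (<) (sorted_list_of_set A)" "sorted_wrt (<) (sorted_list_of_set B)"
    by simp_all
  then show ?thesis unfolding gens_def
    by (auto simp: sorted_wrt_append sorted_wrt_map elim!: sorted_wrt_mono_rel[rotated])
qed

lemma set_gens_indices: "in_range N ws \<Longrightarrow> set (gens (e_indices ws) (f_indices ws)) = set ws"
  using idx_finite[OF in_range_idx] set_by_indices[of ws] by (simp add: gens_def)

lemma wedge_swap: "wedge_list (u @ a # b # v) S = - wedge_list (u @ b # a # v) S"
proof (cases "distinct (u @ a # b # v)")
  case True
  then have ab: "a \<noteq> b" and d: "distinct (u @ b # a # v)" by auto
  have ind: "e_indices (u @ b # a # v) = e_indices (u @ a # b # v)"
    "f_indices (u @ b # a # v) = f_indices (u @ a # b # v)"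
    by (auto simp: e_indices_def f_indices_def)
  from gless_total[OF ab] show ?thesis
  proof
    assume "gless a b" then show ?thesis
      using True d by (simp add: wedge_distinct inversions_swap ind)
  next
    assume "gless b a" then show ?thesis
      using True d inversions_swap[of b a u v] by (simp add: wedge_distinct ind)
  qed
next
  case False
  then have "\<not> distinct (u @ b # a # v)" by auto
  with False show ?thesis by (simp add: wedge_nondistinct)
qed

lemma wedge_move:
  "wedge_list (pre @ g # u @ v) S = (-1) ^ length u * wedge_list (pre @ u @ g # v) S"
proof (induction u arbitrary: pre)
  case (Cons x u)
  have "wedge_list (pre @ g # (x # u) @ v) S = - wedge_list ((pre @ [x]) @ g # u @ v) S"
    using wedge_swap[of pre g x "u @ v" S] by simp
  also have "\<dots> = - ((-1) ^ length u * wedge_list ((pre @ [x]) @ u @ g # v) S)"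
    using Cons.IH[of "pre @ [x]"] by simp
  finally show ?case by simp
qed simp

definition signed :: "mv \<Rightarrow> mv \<Rightarrow> bool" where
  "signed x y \<longleftrightarrow> (\<exists>\<sigma>::int. \<sigma> \<in> {1, -1} \<and> x = (\<lambda>S. of_int \<sigma> * y S))"

lemma signed_cong: "signed x y \<Longrightarrow> (\<And>S. y S = y' S) \<Longrightarrow> signed x y'"
  by (simp add: signed_def)

lemma wedge_same_set:
  assumes "distinct ws" "distinct ws'" "set ws = set ws'"
  shows "signed (wedge_list ws) (wedge_list ws')"
proof -
  have ind: "e_indices ws = e_indices ws'" "f_indices ws = f_indices ws'"
    using assms(3) by (auto simp: e_indices_def f_indices_def)
  let ?k = "inversions ws + inversions ws'"
  have "(-1::complex) ^ inversions ws = (-1) ^ ?k * (-1) ^ inversions ws'"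
    by (simp add: power_add mult.assoc neg_one_power_square)
  then have "wedge_list ws = (\<lambda>S. of_int ((-1) ^ ?k) * wedge_list ws' S)"
    using assms by (simp add: wedge_distinct ind mult.assoc)
  moreover have "(-1::int) ^ ?k \<in> {1, -1}" by (cases "even ?k") auto
  ultimately show ?thesis unfolding signed_def by blast
qed

lemma signed_termwise:
  assumes "\<And>R. R \<in> P \<Longrightarrow> signed (f R) (g R)"
  shows "\<exists>\<epsilon>::'a \<Rightarrow> int. (\<forall>R\<in>P. \<epsilon> R \<in> {1, -1}) \<and>
           (\<forall>S. (\<Sum>R\<in>P. f R S) = (\<Sum>R\<in>P. of_int (\<epsilon> R) * g R S))"
proof -
  from assms have "\<forall>R\<in>P. \<exists>\<sigma>::int. \<sigma> \<in> {1, -1} \<and> f R = (\<lambda>S. of_int \<sigma> * g R S)"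
    by (simp add: signed_def)
  then obtain \<epsilon> where \<epsilon>: "\<forall>R\<in>P. \<epsilon> R \<in> {1, -1} \<and> f R = (\<lambda>S. of_int (\<epsilon> R) * g R S)"
    by metis
  then have "(\<Sum>R\<in>P. f R S) = (\<Sum>R\<in>P. of_int (\<epsilon> R) * g R S)" for S
    by (intro sum.cong) auto
  with \<epsilon> show ?thesis by blast
qed


section \<open>Exterior multiplication, contraction and psi on wedges\<close>

lemma kernel_on_monomial:
  assumes "(A, B) \<in> idx N"
  shows "(\<lambda>S. \<Sum>T\<in>idx N. c * Defs.mono A B T * K T S) = (\<lambda>S. c * K (A, B) S)"
proof
  fix S
  have "(\<Sum>T\<in>idx N. c * Defs.mono A B T * K T S) = (\<Sum>T\<in>idx N. if T = (A, B) then c * K T S else 0)"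
    by (rule sum.cong) (auto simp: Defs.mono_def)
  then show "(\<Sum>T\<in>idx N. c * Defs.mono A B T * K T S) = c * K (A, B) S"
    using assms by simp
qed

lemma ext_op_monomial:
  "(A, B) \<in> idx N \<Longrightarrow> ext_op N g (\<lambda>S. c * Defs.mono A B S) = (\<lambda>S. c * wedge_list (g # gens A B) S)"
  using kernel_on_monomial[of A B N c "\<lambda>T. wedge_list (g # gens (fst T) (snd T))"]
  by (simp add: ext_op_def)

lemma contr_op_monomial:
  "(A, B) \<in> idx N \<Longrightarrow> contr_op N g (\<lambda>S. c * Defs.mono A B S) = (\<lambda>S. c * contr_word g (gens A B) S)"
  using kernel_on_monomial[of A B N c "\<lambda>T. contr_word g (gens (fst T) (snd T))"]
  by (simp add: contr_op_def)

lemma ext_op_scale: "ext_op N g (\<lambda>S. c * x S) = (\<lambda>S. c * ext_op N g x S)"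
  by (simp add: ext_op_def sum_distrib_left mult.assoc)

lemma contr_op_scale: "contr_op N g (\<lambda>S. c * x S) = (\<lambda>S. c * contr_op N g x S)"
  by (simp add: contr_op_def sum_distrib_left mult.assoc)

lemma psi_scale: "psi N g (\<lambda>S. c * x S) = (\<lambda>S. c * psi N g x S)"
  by (simp add: psi_def ext_op_scale contr_op_scale distrib_left)

lemma psi_sum: "psi N g (\<lambda>S. \<Sum>i\<in>K. f i S) = (\<lambda>S. \<Sum>i\<in>K. psi N g (f i) S)"
  by (simp add: psi_def ext_op_def contr_op_def sum_distrib_right sum.distrib sum.swap[of _ K])

lemma ext_op_wedge:
  assumes "in_range N ws"
  shows "ext_op N g (wedge_list ws) = wedge_list (g # ws)"
proof (cases "distinct ws")
  case True
  let ?xs = "gens (e_indices ws) (f_indices ws)"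
  have fin: "finite (e_indices ws)" "finite (f_indices ws)"
    using idx_finite[OF in_range_idx[OF assms]] by auto
  have sg: "set ?xs = set ws" using set_gens_indices[OF assms] .
  have "ext_op N g (wedge_list ws) = (\<lambda>S. (-1) ^ inversions ws * wedge_list (g # ?xs) S)"
    using True by (simp add: wedge_distinct ext_op_monomial in_range_idx[OF assms])
  also have "\<dots> = wedge_list (g # ws)"
  proof (cases "g \<in> set ws")
    case True
    then show ?thesis using sg by (simp add: wedge_nondistinct)
  next
    case False
    have d: "distinct (g # ?xs)" "distinct (g # ws)"
      using False sg gens_distinct[OF fin] \<open>distinct ws\<close> by simp_all
    have ind: "e_indices (g # ?xs) = e_indices (g # ws)" "f_indices (g # ?xs) = f_indices (g # ws)"
      using sg by (auto simp: e_indices_def f_indices_def)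
    have "smaller_count g ?xs = smaller_count g ws"
      using smaller_count_set_eq[OF gens_distinct[OF fin] \<open>distinct ws\<close> sg] .
    then show ?thesis using d
      by (simp add: wedge_distinct ind inversions_Cons inversions_sorted[OF gens_sorted] power_add mult_ac)
  qed
  finally show ?thesis .
qed (simp add: wedge_nondistinct ext_op_def)

lemma contr_op_unpaired:
  assumes "in_range N ws" "\<forall>x\<in>set ws. q g x = 0"
  shows "contr_op N g (wedge_list ws) = (\<lambda>S. 0)"
proof (cases "distinct ws")
  case True
  let ?xs = "gens (e_indices ws) (f_indices ws)"
  have "\<forall>j<length ?xs. q g (?xs ! j) = 0"
    using assms(2) set_gens_indices[OF assms(1)] nth_mem by metis
  then show ?thesis
    using True by (simp add: wedge_distinct contr_op_monomial in_range_idx[OF assms(1)] contr_word_def)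
qed (simp add: wedge_nondistinct contr_op_def)

lemma delete_nth:
  assumes "distinct xs" "sorted_wrt gless xs" "p < length xs"
  shows "distinct (take p xs @ drop (Suc p) xs)" "sorted_wrt gless (take p xs @ drop (Suc p) xs)"
        "set (take p xs @ drop (Suc p) xs) = set xs - {xs ! p}"
proof -
  have xs: "xs = take p xs @ xs ! p # drop (Suc p) xs" using assms(3) by (simp add: id_take_nth_drop)
  have d: "distinct (take p xs @ xs ! p # drop (Suc p) xs)" using assms(1) xs by simp
  have s: "sorted_wrt gless (take p xs @ xs ! p # drop (Suc p) xs)" using assms(2) xs by simp
  show "distinct (take p xs @ drop (Suc p) xs)" using d by auto
  show "sorted_wrt gless (take p xs @ drop (Suc p) xs)" using s by (auto simp: sorted_wrt_append)
  have "set xs = set (take p xs) \<union> {xs ! p} \<union> set (drop (Suc p) xs)"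
    by (subst xs) auto
  then show "set (take p xs @ drop (Suc p) xs) = set xs - {xs ! p}" using d by auto
qed

lemma contr_word_single:
  assumes "distinct xs" "sorted_wrt gless xs" "p < length xs" "xs ! p = h"
    and "\<forall>x\<in>set xs - {h}. q g x = 0"
  shows "contr_word g xs S = (-1) ^ p * q g h *
           Defs.mono (e_indices (take p xs @ drop (Suc p) xs)) (f_indices (take p xs @ drop (Suc p) xs)) S"
proof -
  let ?del = "\<lambda>j. take j xs @ drop (Suc j) xs"
  have "contr_word g xs S = (\<Sum>j<length xs. if j = p then (-1) ^ j * q g (xs ! j) * wedge_list (?del j) S else 0)"
    unfolding contr_word_def
  proof (rule sum.cong[OF refl])
    fix j assume j: "j \<in> {..<length xs}"
    show "(-1) ^ j * q g (xs ! j) * wedge_list (?del j) S =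
          (if j = p then (-1) ^ j * q g (xs ! j) * wedge_list (?del j) S else 0)"
    proof (cases "j = p")
      case False
      then have "xs ! j \<noteq> h" using assms(1,3,4) j nth_eq_iff_index_eq by fastforce
      then show ?thesis using False assms(5) j by simp
    qed simp
  qed
  also have "\<dots> = (-1) ^ p * q g h * wedge_list (?del p) S" using assms(3,4) by simp
  finally show ?thesis
    using delete_nth[OF assms(1-3)] inversions_sorted by (simp add: wedge_distinct)
qed

lemma contr_op_head:
  assumes "in_range N (h # v)" "\<forall>x\<in>set v. q g x = 0"
  shows "contr_op N g (wedge_list (h # v)) = (\<lambda>S. q g h * wedge_list v S)"
proof (cases "distinct (h # v)")
  case False
  have "q g h * wedge_list v S = 0" for S
  proof (cases "distinct v")
    case True with False have "h \<in> set v" by simp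
    with assms(2) show ?thesis by simp
  qed (simp add: wedge_nondistinct)
  with False show ?thesis by (simp add: wedge_nondistinct contr_op_def fun_eq_iff)
next
  case True
  let ?xs = "gens (e_indices (h # v)) (f_indices (h # v))"
  have fin: "finite (e_indices (h # v))" "finite (f_indices (h # v))"
    using idx_finite[OF in_range_idx[OF assms(1)]] by auto
  have sg: "set ?xs = set (h # v)" using set_gens_indices[OF assms(1)] .
  have dxs: "distinct ?xs" using gens_distinct[OF fin] .
  obtain p where p: "p < length ?xs" "?xs ! p = h"
    using sg by (metis in_set_conv_nth list.set_intros(1))
  have "p = smaller_count h (h # v)"
    using smaller_count_nth[OF gens_sorted p(1)] p(2) smaller_count_set_eq[OF dxs True sg] by simp
  then have pc: "p = smaller_count h v" by (simp add: smaller_count_def)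
  have del: "set (take p ?xs @ drop (Suc p) ?xs) = set v"
    using delete_nth(3)[OF dxs gens_sorted p(1)] sg p(2) True by auto
  then have ind: "e_indices (take p ?xs @ drop (Suc p) ?xs) = e_indices v"
    "f_indices (take p ?xs @ drop (Suc p) ?xs) = f_indices v"
    by (auto simp: e_indices_def f_indices_def)
  have cw: "contr_word g ?xs S = (-1) ^ p * q g h * Defs.mono (e_indices v) (f_indices v) S" for S
    using contr_word_single[OF dxs gens_sorted p] assms(2) sg by (simp add: ind)
  have "contr_op N g (wedge_list (h # v)) S = q g h * wedge_list v S" for S
  proof -
    have "contr_op N g (wedge_list (h # v)) S = (-1) ^ inversions (h # v) * contr_word g ?xs S"
      using True by (simp add: wedge_distinct contr_op_monomial in_range_idx[OF assms(1)])
    also have "\<dots> = ((-1) ^ p * (-1) ^ p) * ((-1) ^ inversions v * q g h * Defs.mono (e_indices v) (f_indices v) S)"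
      by (simp add: cw inversions_Cons pc power_add)
    finally show ?thesis using True by (simp add: neg_one_power_square wedge_distinct)
  qed
  then show ?thesis by blast
qed

lemma psi_wedge_unpaired:
  assumes "in_range N (U @ b @ V)" "\<forall>x\<in>set (U @ b @ V). q g x = 0"
  shows "psi N g (wedge_list (U @ b @ V)) = (\<lambda>S. (-1) ^ length U * wedge_list (U @ (g # b) @ V) S)"
proof
  fix S
  have "ext_op N g (wedge_list (U @ b @ V)) S = wedge_list ([] @ g # U @ (b @ V)) S"
    using ext_op_wedge[OF assms(1)] by simp
  also have "\<dots> = (-1) ^ length U * wedge_list (U @ (g # b) @ V) S"
    by (subst wedge_move) simp
  finally show "psi N g (wedge_list (U @ b @ V)) S = (-1) ^ length U * wedge_list (U @ (g # b) @ V) S"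
    by (simp add: psi_def contr_op_unpaired[OF assms])
qed

lemma psi_wedge_paired:
  assumes "in_range N (U @ h # b' @ V)" "\<forall>x\<in>set U \<union> set b' \<union> set V. q g x = 0"
  shows "psi N g (wedge_list (U @ h # b' @ V)) =
    (\<lambda>S. (-1) ^ length U * (wedge_list (U @ g # h # b' @ V) S + q g h * wedge_list (U @ b' @ V) S))"
proof
  fix S
  have ext: "ext_op N g (wedge_list (U @ h # b' @ V)) S = (-1) ^ length U * wedge_list (U @ g # h # b' @ V) S"
    using ext_op_wedge[OF assms(1)] wedge_move[of "[]" g U "h # b' @ V"] by simp
  have "wedge_list (U @ h # b' @ V) T = (-1) ^ length U * wedge_list (h # U @ b' @ V) T" for T
    using wedge_move[of "[]" h U "b' @ V" T] by (simp add: mult.assoc[symmetric] neg_one_power_square)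
  then have "wedge_list (U @ h # b' @ V) = (\<lambda>S. (-1) ^ length U * wedge_list (h # U @ b' @ V) S)"
    by blast
  moreover have "in_range N (h # U @ b' @ V)" using assms(1) by (auto simp: in_range_def)
  ultimately have "contr_op N g (wedge_list (U @ h # b' @ V)) S = (-1) ^ length U * (q g h * wedge_list (U @ b' @ V) S)"
    using contr_op_head[of N h "U @ b' @ V" g] assms(2) by (simp add: contr_op_scale)
  with ext show "psi N g (wedge_list (U @ h # b' @ V)) S =
      (-1) ^ length U * (wedge_list (U @ g # h # b' @ V) S + q g h * wedge_list (U @ b' @ V) S)"
    by (simp add: psi_def distrib_left)
qed

lemma theta_isotropic:
  "in_range N ws \<Longrightarrow> (\<forall>x\<in>set ws. \<forall>y\<in>set ws. q x y = 0) \<Longrightarrow>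
   foldr (psi N) ws (Defs.mono {} {}) = wedge_list ws"
proof (induction ws)
  case Nil
  show ?case by (simp add: wedge_distinct e_indices_def f_indices_def)
next
  case (Cons g ws)
  have ws: "in_range N ws" using Cons.prems(1) by (simp add: in_range_def)
  then have "foldr (psi N) (g # ws) (Defs.mono {} {}) = psi N g (wedge_list ws)"
    using Cons by simp
  also have "\<dots> = wedge_list (g # ws)"
    using psi_wedge_unpaired[of N "[]" ws "[]" g] ws Cons.prems(2) by simp
  finally show ?case .
qed

lemma psi_signed_sum:
  assumes "signed X (\<lambda>S. c * (\<Sum>T\<in>P. w T S))"
    and "\<And>T. T \<in> P \<Longrightarrow> psi N g (w T) = (\<lambda>S. (-1) ^ l * v T S)"
  shows "signed (psi N g X) (\<lambda>S. c * (\<Sum>T\<in>P. v T S))"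
proof -
  obtain \<sigma> :: int where \<sigma>: "\<sigma> \<in> {1, -1}" and X: "X = (\<lambda>S. of_int \<sigma> * (c * (\<Sum>T\<in>P. w T S)))"
    using assms(1) by (auto simp: signed_def)
  have "psi N g X S = of_int (\<sigma> * (-1) ^ l) * (c * (\<Sum>T\<in>P. v T S))" for S
    using assms(2)
    by (simp add: X psi_scale psi_sum sum_distrib_left[symmetric] mult.left_commute)
  moreover have "\<sigma> * (-1) ^ l \<in> {1, -1}" using \<sigma> by (cases "even l") auto
  ultimately show ?thesis unfolding signed_def by blast
qed


section \<open>Block words\<close>

definition block_word :: "nat \<Rightarrow> (nat \<Rightarrow> gen list) \<Rightarrow> gen list" where
  "block_word N blk = concat (map blk [1..<Suc N])"

definition blocks_indexed :: "(nat \<Rightarrow> gen list) \<Rightarrow> bool" where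
  "blocks_indexed blk \<longleftrightarrow> (\<forall>k. \<forall>x\<in>set (blk k). gen_index x = k)"

definition blocks_before :: "(nat \<Rightarrow> gen list) \<Rightarrow> nat \<Rightarrow> gen list" where
  "blocks_before blk k = concat (map blk [1..<k])"

definition blocks_after :: "nat \<Rightarrow> (nat \<Rightarrow> gen list) \<Rightarrow> nat \<Rightarrow> gen list" where
  "blocks_after N blk k = concat (map blk [Suc k..<Suc N])"

lemma block_word_split:
  assumes "1 \<le> k" "k \<le> N"
  shows "block_word N blk = blocks_before blk k @ blk k @ blocks_after N blk k"
proof -
  have "[1..<k + (Suc N - k)] = [1..<k] @ [k..<k + (Suc N - k)]"
    using assms by (intro upt_add_eq_append) simp
  moreover have "[k..<Suc N] = k # [Suc k..<Suc N]" using assms by (simp add: upt_conv_Cons)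
  ultimately show ?thesis using assms
    by (simp add: block_word_def blocks_before_def blocks_after_def del: upt_Suc)
qed

lemma block_word_update:
  assumes "1 \<le> k" "k \<le> N"
  shows "block_word N (blk(k := b)) = blocks_before blk k @ b @ blocks_after N blk k"
proof -
  have "blocks_before (blk(k := b)) k = blocks_before blk k"
    "blocks_after N (blk(k := b)) k = blocks_after N blk k"
    unfolding blocks_before_def blocks_after_def by (auto intro!: arg_cong[where f=concat])
  then show ?thesis using block_word_split[OF assms, of "blk(k := b)"] by simp
qed

lemma block_word_cong: "(\<And>k. k \<in> {1..N} \<Longrightarrow> b1 k = b2 k) \<Longrightarrow> block_word N b1 = block_word N b2"
  unfolding block_word_def by (auto intro!: arg_cong[where f=concat])

lemma set_block_word:
  assumes "blocks_indexed blk"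
  shows "x \<in> set (block_word N blk) \<longleftrightarrow> gen_index x \<in> {1..N} \<and> x \<in> set (blk (gen_index x))"
proof -
  have "set [1..<Suc N] = {1..N}" by auto
  then have words: "set (block_word N blk) = (\<Union>k\<in>{1..N}. set (blk k))"
    by (simp add: block_word_def del: upt_Suc)
  show ?thesis
  proof
    assume "x \<in> set (block_word N blk)"
    then obtain k where "k \<in> {1..N}" "x \<in> set (blk k)" using words by auto
    moreover from this(2) have "gen_index x = k" using assms unfolding blocks_indexed_def by blast
    ultimately show "gen_index x \<in> {1..N} \<and> x \<in> set (blk (gen_index x))" by simp
  qed (use words in auto)
qed

lemma in_range_block_word: "blocks_indexed blk \<Longrightarrow> in_range N (block_word N blk)"
  by (simp add: in_range_def set_block_word)

lemma index_blocks_before: "blocks_indexed blk \<Longrightarrow> x \<in> set (blocks_before blk k) \<Longrightarrow> gen_index x < k"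
  unfolding blocks_before_def blocks_indexed_def by auto

lemma index_blocks_after: "blocks_indexed blk \<Longrightarrow> x \<in> set (blocks_after N blk k) \<Longrightarrow> k < gen_index x"
  unfolding blocks_after_def blocks_indexed_def by auto

lemma distinct_block_word:
  assumes "blocks_indexed blk" "\<forall>k. distinct (blk k)"
  shows "distinct (block_word N blk)"
proof -
  have "distinct (concat (map blk ks))" if "distinct ks" for ks
    using that
  proof (induction ks)
    case (Cons a ks)
    have False if "y \<in> set (blk a)" "b \<in> set ks" "y \<in> set (blk b)" for y b
    proof -
      have "gen_index y = a" "gen_index y = b"
        using assms(1) that unfolding blocks_indexed_def by blast+
      then show False using that(2) Cons.prems by auto
    qed
    then have "set (blk a) \<inter> set (concat (map blk ks)) = {}" by auto
    then show ?case using Cons assms(2) by simp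
  qed simp
  then show ?thesis by (simp add: block_word_def)
qed

lemma parity_concat:
  "(\<forall>j\<in>set xs. even (length (b1 j)) = even (length (b2 j))) \<Longrightarrow>
   (-1::complex) ^ length (concat (map b1 xs)) = (-1) ^ length (concat (map b2 xs))"
proof (induction xs)
  case (Cons a xs)
  then have "(-1::complex) ^ length (b1 a) = (-1) ^ length (b2 a)"
    by (cases "even (length (b1 a))") auto
  then show ?case using Cons by (simp add: power_add)
qed simp

lemma psi_block_unpaired:
  assumes "blocks_indexed blk" "1 \<le> k" "k \<le> N" "gen_index g = k" "\<forall>x\<in>set (blk k). q g x = 0"
  shows "psi N g (wedge_list (block_word N blk)) =
    (\<lambda>S. (-1) ^ length (blocks_before blk k) * wedge_list (block_word N (blk(k := g # blk k))) S)"
proof -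
  have w: "block_word N blk = blocks_before blk k @ blk k @ blocks_after N blk k"
    by (rule block_word_split[OF assms(2,3)])
  have "in_range N (blocks_before blk k @ blk k @ blocks_after N blk k)"
    using in_range_block_word[OF assms(1), of N] by (simp only: w)
  moreover have "\<forall>x\<in>set (blocks_before blk k @ blk k @ blocks_after N blk k). q g x = 0"
    using assms(4,5) q_other_index index_blocks_before[OF assms(1)] index_blocks_after[OF assms(1)]
    by fastforce
  ultimately show ?thesis
    unfolding w block_word_update[OF assms(2,3)] by (rule psi_wedge_unpaired)
qed

lemma psi_block_paired:
  assumes "blocks_indexed blk" "1 \<le> k" "k \<le> N" "gen_index g = k" "blk k = h # b'"
    and "\<forall>x\<in>set b'. q g x = 0"
  shows "psi N g (wedge_list (block_word N blk)) = (\<lambda>S. (-1) ^ length (blocks_before blk k) *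
     (wedge_list (block_word N (blk(k := g # h # b'))) S + q g h * wedge_list (block_word N (blk(k := b'))) S))"
proof -
  have w: "block_word N blk = blocks_before blk k @ h # b' @ blocks_after N blk k"
    using block_word_split[OF assms(2,3)] assms(5) by simp
  have "in_range N (blocks_before blk k @ h # b' @ blocks_after N blk k)"
    using in_range_block_word[OF assms(1), of N] by (simp only: w)
  moreover have "\<forall>x\<in>set (blocks_before blk k) \<union> set b' \<union> set (blocks_after N blk k). q g x = 0"
    using assms(4,6) q_other_index index_blocks_before[OF assms(1)] index_blocks_after[OF assms(1)]
    by fastforce
  ultimately have "psi N g (wedge_list (blocks_before blk k @ h # b' @ blocks_after N blk k)) =
    (\<lambda>S. (-1) ^ length (blocks_before blk k) * (wedge_list (blocks_before blk k @ g # h # b' @ blocks_after N blk k) S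
       + q g h * wedge_list (blocks_before blk k @ b' @ blocks_after N blk k) S))"
    by (rule psi_wedge_paired)
  then show ?thesis unfolding w block_word_update[OF assms(2,3)] by simp
qed


lemma sum_Pow_insert:
  assumes "finite A" "k \<notin> A"
  shows "(\<Sum>D\<in>Pow A. f D + f (insert k D)) = (\<Sum>D\<in>Pow (insert k A). (f D :: complex))"
proof -
  have inj: "inj_on (insert k) (Pow A)"
  proof (rule inj_onI)
    fix x y assume "x \<in> Pow A" "y \<in> Pow A" "insert k x = insert k y"
    then have "insert k x - {k} = insert k y - {k}" "k \<notin> x" "k \<notin> y" using assms(2) by auto
    then show "x = y" by simp
  qed
  have disjoint: "Pow A \<inter> insert k ` Pow A = {}" using assms(2) by blast
  have "(\<Sum>D\<in>Pow (insert k A). f D) = (\<Sum>D\<in>Pow A. f D) + (\<Sum>D\<in>insert k ` Pow A. f D)"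
    unfolding Pow_insert using assms(1) disjoint by (intro sum.union_disjoint) auto
  also have "(\<Sum>D\<in>insert k ` Pow A. f D) = (\<Sum>D\<in>Pow A. f (insert k D))"
    using sum.reindex[OF inj] by simp
  finally show ?thesis by (simp add: sum.distrib)
qed

lemma sum_Pow_remove:
  assumes "finite A" "k \<in> A"
  shows "(\<Sum>D\<in>Pow A. f (D - {k})) = 2 * (\<Sum>D\<in>Pow (A - {k}). (f D :: complex))"
proof -
  have "(\<Sum>D\<in>Pow (insert k (A - {k})). f (D - {k})) =
        (\<Sum>D\<in>Pow (A - {k}). f (D - {k}) + f (insert k D - {k}))"
    using sum_Pow_insert[of "A - {k}" k "\<lambda>D. f (D - {k})"] assms(1) by simp
  also have "\<dots> = (\<Sum>D\<in>Pow (A - {k}). 2 * f D)"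
  proof (rule sum.cong[OF refl])
    fix D assume "D \<in> Pow (A - {k})"
    then have "D - {k} = D" "insert k D - {k} = D" by auto
    then show "f (D - {k}) + f (insert k D - {k}) = 2 * f D" by simp
  qed
  finally show ?thesis using assms(2) by (simp add: insert_absorb sum_distrib_left)
qed


section \<open>Applying f_n, ..., f_1\<close>

text \<open>Block k after the f's of index > m have been applied to e_{j_r} ... e_{j_1}
  (J = {j_1 < ... < j_r}); D records the indices k \<in> J where the contraction was chosen.\<close>
definition fblock :: "nat set \<Rightarrow> nat \<Rightarrow> nat set \<Rightarrow> nat \<Rightarrow> gen list" where
  "fblock J m D k = (if k \<le> m then (if k \<in> J then [E k] else [])
     else if k \<in> J then (if k \<in> D then [] else [F k, E k]) else [F k])"

lemma fblock_indexed: "blocks_indexed (fblock J m D)"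
  by (simp add: blocks_indexed_def fblock_def)

lemma fblock_distinct: "\<forall>k. distinct (fblock J m D k)"
  by (simp add: fblock_def)

lemma fblock_before: "blocks_before (fblock J (Suc n) D) (Suc n) = blocks_before (fblock J (Suc n) {}) (Suc n)"
  unfolding blocks_before_def by (auto simp: fblock_def intro!: arg_cong[where f=concat])

text \<open>f_k with k \<notin> J has no partner: it is inserted into block k.\<close>
lemma psi_F_outside:
  assumes "Suc n \<le> N" "Suc n \<notin> J"
  shows "psi N (F (Suc n)) (wedge_list (block_word N (fblock J (Suc n) D))) =
    (\<lambda>S. (-1) ^ length (blocks_before (fblock J (Suc n) {}) (Suc n)) * wedge_list (block_word N (fblock J n D)) S)"
proof -
  have "fblock J (Suc n) D (Suc n) = []" "(fblock J (Suc n) D)(Suc n := [F (Suc n)]) = fblock J n D"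
    using assms(2) by (auto simp: fblock_def fun_eq_iff)
  then show ?thesis
    using psi_block_unpaired[OF fblock_indexed _ assms(1), of "F (Suc n)" J "Suc n" D] fblock_before[of J n D]
    by simp
qed

text \<open>f_k with k \<in> J meets e_k: both the insertion and the contraction survive.\<close>
lemma psi_F_inside:
  assumes "Suc n \<le> N" "Suc n \<in> J" "Suc n \<notin> D"
  shows "psi N (F (Suc n)) (wedge_list (block_word N (fblock J (Suc n) D))) =
    (\<lambda>S. (-1) ^ length (blocks_before (fblock J (Suc n) {}) (Suc n)) *
         (wedge_list (block_word N (fblock J n D)) S + wedge_list (block_word N (fblock J n (insert (Suc n) D))) S))"
proof -
  have "(fblock J (Suc n) D)(Suc n := [F (Suc n), E (Suc n)]) = fblock J n D"
    "(fblock J (Suc n) D)(Suc n := []) = fblock J n (insert (Suc n) D)"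
    "fblock J (Suc n) D (Suc n) = [E (Suc n)]"
    using assms(2,3) by (auto simp: fblock_def fun_eq_iff)
  then show ?thesis
    using psi_block_paired[OF fblock_indexed _ assms(1), of "F (Suc n)"] fblock_before[of J n D] by simp
qed

lemma apply_F_word:
  assumes J: "J \<subseteq> {1..N}" and "m \<le> N"
  shows "signed (foldr (psi N) (map F [Suc m..<Suc N]) (wedge_list (rev (eword J))))
                (\<lambda>S. \<Sum>D\<in>Pow (J \<inter> {Suc m..N}). wedge_list (block_word N (fblock J m D)) S)"
  using \<open>m \<le> N\<close>
proof (induction m rule: inc_induct)
  case base
  have finJ: "finite J" using J finite_subset by blast
  have "set (block_word N (fblock J N {})) = E ` J"
    using J by (auto simp: set_block_word[OF fblock_indexed] fblock_def split: if_splits)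
  then have "signed (wedge_list (rev (eword J))) (wedge_list (block_word N (fblock J N {})))"
    using finJ by (intro wedge_same_set)
      (auto simp: eword_def distinct_map distinct_block_word fblock_indexed fblock_distinct inj_on_def)
  then show ?case by simp
next
  case (step n)
  let ?k = "Suc n" and ?X = "foldr (psi N) (map F [Suc (Suc n)..<Suc N]) (wedge_list (rev (eword J)))"
  have word: "map F [Suc n..<Suc N] = F ?k # map F [Suc ?k..<Suc N]"
    using step.hyps by (simp add: upt_conv_Cons)
  show ?case
  proof (cases "?k \<in> J")
    case False
    have "signed (psi N (F ?k) ?X) (\<lambda>S. \<Sum>D\<in>Pow (J \<inter> {Suc ?k..N}). wedge_list (block_word N (fblock J n D)) S)"
      by (rule psi_signed_sum[where c=1, simplified, OF step.IH], rule psi_F_outside) (use False step.hyps in auto)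
    moreover have "J \<inter> {Suc n..N} = J \<inter> {Suc ?k..N}" using False by (auto simp: Suc_le_eq le_less)
    ultimately show ?thesis unfolding word list.map foldr_Cons o_apply by simp
  next
    case True
    have "signed (psi N (F ?k) ?X) (\<lambda>S. \<Sum>D\<in>Pow (J \<inter> {Suc ?k..N}).
       wedge_list (block_word N (fblock J n D)) S + wedge_list (block_word N (fblock J n (insert ?k D))) S)"
      by (rule psi_signed_sum[where c=1, simplified, OF step.IH], rule psi_F_inside) (use True step.hyps in auto)
    moreover have "J \<inter> {Suc n..N} = insert ?k (J \<inter> {Suc ?k..N})" using True step.hyps by auto
    then have "(\<Sum>D\<in>Pow (J \<inter> {Suc ?k..N}). wedge_list (block_word N (fblock J n D)) S
                 + wedge_list (block_word N (fblock J n (insert ?k D))) S)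
             = (\<Sum>D\<in>Pow (J \<inter> {Suc n..N}). wedge_list (block_word N (fblock J n D)) S)" for S
      by (simp only:) (rule sum_Pow_insert; simp)
    ultimately show ?thesis unfolding word list.map foldr_Cons o_apply by (rule signed_cong)
  qed
qed


section \<open>Applying e_I\<close>

text \<open>Block k after e_i, i \<in> I, i > p, have also been applied; T records the free choices
  among the indices still varying, given by pending I J N p.\<close>
definition eblock :: "nat set \<Rightarrow> nat set \<Rightarrow> nat \<Rightarrow> nat set \<Rightarrow> nat \<Rightarrow> gen list" where
  "eblock I J p T k = (if k \<le> p then fblock J 0 T k
    else if k \<in> I \<and> k \<in> J then [E k]
    else if k \<in> J then (if k \<in> T then [] else [F k, E k])
    else if k \<in> I then (if k \<in> T then [E k, F k] else [])
    else [F k])"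

definition pending :: "nat set \<Rightarrow> nat set \<Rightarrow> nat \<Rightarrow> nat \<Rightarrow> nat set" where
  "pending I J N p = (J \<inter> {1..p}) \<union> (((J - I) \<union> (I - J)) \<inter> {Suc p..N})"

lemma eblock_indexed: "blocks_indexed (eblock I J p T)"
  by (auto simp: blocks_indexed_def eblock_def fblock_def)

lemma eblock_distinct: "\<forall>k. distinct (eblock I J p T k)"
  by (simp add: eblock_def fblock_def)

lemma finite_pending: "finite (pending I J N p)"
  by (simp add: pending_def)

lemma eblock_before_sign:
  "(-1::complex) ^ length (blocks_before (eblock I J p T) k) = (-1) ^ length (blocks_before (eblock I J p {}) k)"
  unfolding blocks_before_def by (rule parity_concat) (auto simp: eblock_def fblock_def)

text \<open>e_k with k \<in> I - J meets f_k (unless block k is already empty): both terms survive.\<close>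
lemma psi_E_unpaired:
  assumes "Suc n \<le> N" "Suc n \<in> I" "Suc n \<notin> J" "Suc n \<notin> T"
  shows "psi N (E (Suc n)) (wedge_list (block_word N (eblock I J (Suc n) T))) =
    (\<lambda>S. (-1) ^ length (blocks_before (eblock I J (Suc n) {}) (Suc n)) *
         (wedge_list (block_word N (eblock I J n T)) S + wedge_list (block_word N (eblock I J n (insert (Suc n) T))) S))"
proof -
  have "(eblock I J (Suc n) T)(Suc n := [E (Suc n), F (Suc n)]) = eblock I J n (insert (Suc n) T)"
    "(eblock I J (Suc n) T)(Suc n := []) = eblock I J n T"
    "eblock I J (Suc n) T (Suc n) = [F (Suc n)]"
    using assms(2-4) by (auto simp: eblock_def fblock_def fun_eq_iff)
  then show ?thesis
    using psi_block_paired[OF eblock_indexed _ assms(1), of "E (Suc n)"] eblock_before_sign[of I J "Suc n" T]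
    by (simp add: add.commute)
qed

text \<open>e_k with k \<in> I \<inter> J: block k becomes e_k whether or not k \<in> T, so two choices merge.\<close>
lemma psi_E_paired:
  assumes "Suc n \<le> N" "Suc n \<in> I" "Suc n \<in> J"
  shows "psi N (E (Suc n)) (wedge_list (block_word N (eblock I J (Suc n) T))) =
    (\<lambda>S. (-1) ^ length (blocks_before (eblock I J (Suc n) {}) (Suc n)) *
         wedge_list (block_word N (eblock I J n (T - {Suc n}))) S)"
proof -
  let ?k = "Suc n"
  have e: "(eblock I J ?k T)(?k := [E ?k]) = eblock I J n (T - {?k})"
    using assms(2,3) by (auto simp: eblock_def fblock_def fun_eq_iff)
  show ?thesis
  proof (cases "?k \<in> T")
    case True
    then have "eblock I J ?k T ?k = []" using assms(3) by (simp add: eblock_def fblock_def)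
    then show ?thesis using psi_block_unpaired[OF eblock_indexed _ assms(1), of "E ?k"] e
      eblock_before_sign[of I J ?k T] by simp
  next
    case False
    then have bk: "eblock I J ?k T ?k = [F ?k, E ?k]" using assms(3) by (simp add: eblock_def fblock_def)
    have "\<not> distinct (block_word N ((eblock I J ?k T)(?k := [E ?k, F ?k, E ?k])))"
      by (simp add: block_word_update[OF _ assms(1)])
    then show ?thesis using psi_block_paired[OF eblock_indexed _ assms(1) _ bk, of "E ?k"] e
      eblock_before_sign[of I J ?k T] by (simp add: wedge_nondistinct)
  qed
qed

lemma apply_E_word:
  assumes J: "J \<subseteq> {1..N}" and "p \<le> N"
    and X: "signed X (\<lambda>S. \<Sum>D\<in>Pow J. wedge_list (block_word N (fblock J 0 D)) S)"
  shows "signed (foldr (psi N) (map E (filter (\<lambda>i. i \<in> I) [Suc p..<Suc N])) X)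
     (\<lambda>S. 2 ^ card (I \<inter> J \<inter> {Suc p..N}) *
          (\<Sum>T\<in>Pow (pending I J N p). wedge_list (block_word N (eblock I J p T)) S))"
  using \<open>p \<le> N\<close>
proof (induction p rule: inc_induct)
  case base
  have "pending I J N N = J" using J by (auto simp: pending_def)
  moreover have "block_word N (eblock I J N T) = block_word N (fblock J 0 T)" for T
    by (rule block_word_cong) (simp add: eblock_def)
  ultimately show ?case using X by simp
next
  case (step n)
  let ?k = "Suc n" and ?A = "pending I J N (Suc n)" and ?c = "card (I \<inter> J \<inter> {Suc (Suc n)..N})"
  let ?X = "foldr (psi N) (map E (filter (\<lambda>i. i \<in> I) [Suc (Suc n)..<Suc N])) X"
  let ?w = "\<lambda>m T S. wedge_list (block_word N (eblock I J m T)) S"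
  have upt: "[Suc n..<Suc N] = ?k # [Suc ?k..<Suc N]" using step.hyps by (simp add: upt_conv_Cons)
  consider "?k \<notin> I" | "?k \<in> I" "?k \<notin> J" | "?k \<in> I" "?k \<in> J" by blast
  then show ?case
  proof cases
    case 1
    have "filter (\<lambda>i. i \<in> I) [Suc n..<Suc N] = filter (\<lambda>i. i \<in> I) [Suc ?k..<Suc N]"
      using 1 by (simp add: upt del: upt_Suc)
    moreover have "eblock I J n = eblock I J ?k" using 1 by (auto simp: eblock_def fblock_def fun_eq_iff le_Suc_eq)
    moreover have "pending I J N n = ?A" "I \<inter> J \<inter> {Suc n..N} = I \<inter> J \<inter> {Suc ?k..N}"
      using 1 step.hyps by (auto simp: pending_def Suc_le_eq le_less)
    ultimately show ?thesis using step.IH by (simp only:)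
  next
    case 2
    have word: "map E (filter (\<lambda>i. i \<in> I) [Suc n..<Suc N]) = E ?k # map E (filter (\<lambda>i. i \<in> I) [Suc ?k..<Suc N])"
      using 2 by (simp add: upt del: upt_Suc)
    have A: "pending I J N n = insert ?k ?A" "?k \<notin> ?A"
      using 2 step.hyps by (auto simp: pending_def Suc_le_eq le_less)
    have c: "I \<inter> J \<inter> {Suc n..N} = I \<inter> J \<inter> {Suc ?k..N}" using 2 by (auto simp: Suc_le_eq le_less)
    have "signed (psi N (E ?k) ?X) (\<lambda>S. 2 ^ ?c * (\<Sum>T\<in>Pow ?A. ?w n T S + ?w n (insert ?k T) S))"
      by (rule psi_signed_sum[OF step.IH], rule psi_E_unpaired) (use 2 step.hyps A(2) in auto)
    moreover have "2 ^ ?c * (\<Sum>T\<in>Pow ?A. ?w n T S + ?w n (insert ?k T) S) =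
        2 ^ card (I \<inter> J \<inter> {Suc n..N}) * (\<Sum>T\<in>Pow (pending I J N n). ?w n T S)" for S
      using sum_Pow_insert[OF finite_pending A(2), of "\<lambda>T. ?w n T S"] by (simp only: c A(1))
    ultimately show ?thesis unfolding word list.map foldr_Cons o_apply by (rule signed_cong)
  next
    case 3
    have word: "map E (filter (\<lambda>i. i \<in> I) [Suc n..<Suc N]) = E ?k # map E (filter (\<lambda>i. i \<in> I) [Suc ?k..<Suc N])"
      using 3 by (simp add: upt del: upt_Suc)
    have A: "pending I J N n = ?A - {?k}" "?k \<in> ?A"
      using 3 step.hyps by (auto simp: pending_def Suc_le_eq le_less)
    have "I \<inter> J \<inter> {Suc n..N} = insert ?k (I \<inter> J \<inter> {Suc ?k..N})" using 3 step.hyps by auto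
    then have c: "card (I \<inter> J \<inter> {Suc n..N}) = Suc ?c" by simp
    have "signed (psi N (E ?k) ?X) (\<lambda>S. 2 ^ ?c * (\<Sum>T\<in>Pow ?A. ?w n (T - {?k}) S))"
      by (rule psi_signed_sum[OF step.IH], rule psi_E_paired) (use 3 step.hyps in auto)
    moreover have "2 ^ ?c * (\<Sum>T\<in>Pow ?A. ?w n (T - {?k}) S) =
        2 ^ card (I \<inter> J \<inter> {Suc n..N}) * (\<Sum>T\<in>Pow (pending I J N n). ?w n T S)" for S
      using sum_Pow_remove[OF finite_pending A(2), of "\<lambda>T. ?w n T S"] by (simp add: c A(1))
    ultimately show ?thesis unfolding word list.map foldr_Cons o_apply by (rule signed_cong)
  qed
qed


lemma beta_as_phases:
  assumes "I \<subseteq> {1..n}"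
  shows "beta n I J = foldr (psi n) (map E (filter (\<lambda>i. i \<in> I) [1..<Suc n]))
           (foldr (psi n) (map F [1..<Suc n]) (foldr (psi n) (rev (eword J)) (Defs.mono {} {})))"
proof -
  have "sorted_list_of_set I = filter (\<lambda>i. i \<in> I) [1..<Suc n]"
    using assms finite_subset[OF assms]
    by (intro sorted_distinct_set_unique) (auto simp: sorted_wrt_filter simp del: upt_Suc)
  then show ?thesis
    by (simp add: beta_def theta_word_def alpha_word_def eword_def fword_def del: upt_Suc)
qed

lemma beta_signed:
  assumes I: "I \<subseteq> {1..n}" and J: "J \<subseteq> {1..n}"
  shows "signed (beta n I J) (\<lambda>S. 2 ^ card (I \<inter> J) *
           (\<Sum>T\<in>Pow ((I - J) \<union> (J - I)). wedge_list (block_word n (eblock I J 0 T)) S))"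
proof -
  have isotropic: "foldr (psi n) (rev (eword J)) (Defs.mono {} {}) = wedge_list (rev (eword J))"
    using J finite_subset[OF J] by (intro theta_isotropic) (auto simp: in_range_def eword_def)
  have "J \<inter> {Suc 0..n} = J" using J by auto
  then have "signed (foldr (psi n) (map F [Suc 0..<Suc n]) (wedge_list (rev (eword J))))
                (\<lambda>S. \<Sum>D\<in>Pow J. wedge_list (block_word n (fblock J 0 D)) S)"
    using apply_F_word[OF J, of 0] by simp
  from apply_E_word[OF J _ this, of 0 I]
  have "signed (beta n I J) (\<lambda>S. 2 ^ card (I \<inter> J \<inter> {Suc 0..n}) *
          (\<Sum>T\<in>Pow (pending I J n 0). wedge_list (block_word n (eblock I J 0 T)) S))"
    unfolding beta_as_phases[OF I] isotropic One_nat_def by simp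
  moreover have "I \<inter> J \<inter> {Suc 0..n} = I \<inter> J" "pending I J n 0 = (I - J) \<union> (J - I)"
    using I J by (auto simp: pending_def)
  ultimately show ?thesis by simp
qed

definition target_word :: "nat \<Rightarrow> nat set \<Rightarrow> nat set \<Rightarrow> nat set \<Rightarrow> gen list" where
  "target_word n I J R = map E (sorted_list_of_set (I \<inter> J)) @ map E (sorted_list_of_set R)
     @ map F (sorted_list_of_set (({1..n} - I) \<inter> ({1..n} - J))) @ map F (sorted_list_of_set R)"

text \<open>The final block word for the choice T is a permutation of the target word for
  R = (T \<inter> (I - J)) \<union> ((J - I) - T); this correspondence is an involution of Pow (I \<Delta> J).\<close>
lemma final_block_word_signs:
  assumes I: "I \<subseteq> {1..n}" and J: "J \<subseteq> {1..n}"
  shows "\<exists>\<epsilon>::nat set \<Rightarrow> int. (\<forall>R\<in>Pow ((I - J) \<union> (J - I)). \<epsilon> R \<in> {1, -1}) \<and>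
     (\<forall>S. (\<Sum>T\<in>Pow ((I - J) \<union> (J - I)). wedge_list (block_word n (eblock I J 0 T)) S) =
          (\<Sum>R\<in>Pow ((I - J) \<union> (J - I)). of_int (\<epsilon> R) * wedge_list (target_word n I J R) S))"
proof -
  let ?D = "(I - J) \<union> (J - I)"
  define \<phi> where "\<phi> R = (R \<inter> (I - J)) \<union> ((J - I) - R)" for R
  have finite: "finite I" "finite J" using I J finite_subset by blast+
  have involution: "\<phi> (\<phi> R) = R" "\<phi> R \<subseteq> ?D" if "R \<subseteq> ?D" for R
    using that by (auto simp: \<phi>_def)
  have reindex: "(\<Sum>T\<in>Pow ?D. wedge_list (block_word n (eblock I J 0 T)) S) =
        (\<Sum>R\<in>Pow ?D. wedge_list (block_word n (eblock I J 0 (\<phi> R))) S)" for S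
    by (rule sum.reindex_bij_witness[where i=\<phi> and j=\<phi>]) (simp_all add: involution)
  have "signed (wedge_list (block_word n (eblock I J 0 (\<phi> R)))) (wedge_list (target_word n I J R))"
    if R: "R \<in> Pow ?D" for R
  proof (rule wedge_same_set)
    have "finite R" using R finite by (auto intro: finite_subset)
    then show "distinct (target_word n I J R)" using R finite
      by (auto simp: target_word_def distinct_map inj_on_def)
    show "set (block_word n (eblock I J 0 (\<phi> R))) = set (target_word n I J R)"
    proof (rule set_eqI)
      fix x
      show "x \<in> set (block_word n (eblock I J 0 (\<phi> R))) \<longleftrightarrow> x \<in> set (target_word n I J R)"
        unfolding set_block_word[OF eblock_indexed] using R finite I J \<open>finite R\<close>
        by (cases x) (auto simp: target_word_def eblock_def \<phi>_def)
    qed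
  qed (simp add: distinct_block_word eblock_indexed eblock_distinct)
  then show ?thesis
    using signed_termwise[of "Pow ?D" "\<lambda>R. wedge_list (block_word n (eblock I J 0 (\<phi> R)))"
        "\<lambda>R. wedge_list (target_word n I J R)"] reindex by auto
qed

theorem mainTheorem2:
  fixes n :: nat and I J :: "nat set"
  assumes "I \<subseteq> {1..n}" and "J \<subseteq> {1..n}"
  shows "\<exists>\<epsilon> :: nat set \<Rightarrow> int.
    (\<forall>R. R \<subseteq> (I - J) \<union> (J - I) \<longrightarrow> \<epsilon> R \<in> {1, -1}) \<and>
    beta n I J =
      (\<lambda>S. 2 ^ card (I \<inter> J) *
        (\<Sum>R\<in>Pow ((I - J) \<union> (J - I)).
           of_int (\<epsilon> R) *
           wedge_list (map E (sorted_list_of_set (I \<inter> J)) @ map E (sorted_list_of_set R)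
                       @ map F (sorted_list_of_set (({1..n} - I) \<inter> ({1..n} - J)))
                       @ map F (sorted_list_of_set R)) S))"
proof -
  obtain \<sigma> :: int where \<sigma>: "\<sigma> \<in> {1, -1}" and beta: "beta n I J = (\<lambda>S. of_int \<sigma> * (2 ^ card (I \<inter> J) *
      (\<Sum>T\<in>Pow ((I - J) \<union> (J - I)). wedge_list (block_word n (eblock I J 0 T)) S)))"
    using beta_signed[OF assms] by (auto simp: signed_def)
  obtain \<epsilon> :: "nat set \<Rightarrow> int" where \<epsilon>: "\<forall>R\<in>Pow ((I - J) \<union> (J - I)). \<epsilon> R \<in> {1, -1}"
    and sum: "\<forall>S. (\<Sum>T\<in>Pow ((I - J) \<union> (J - I)). wedge_list (block_word n (eblock I J 0 T)) S) =
          (\<Sum>R\<in>Pow ((I - J) \<union> (J - I)). of_int (\<epsilon> R) * wedge_list (target_word n I J R) S)"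
    using final_block_word_signs[OF assms] by blast
  show ?thesis unfolding target_word_def[symmetric]
  proof (intro exI conjI allI impI)
    show "\<sigma> * \<epsilon> R \<in> {1, -1}" if "R \<subseteq> (I - J) \<union> (J - I)" for R
      using \<sigma> \<epsilon> that by auto
    show "beta n I J = (\<lambda>S. 2 ^ card (I \<inter> J) * (\<Sum>R\<in>Pow ((I - J) \<union> (J - I)).
        of_int (\<sigma> * \<epsilon> R) * wedge_list (target_word n I J R) S))"
      by (simp add: beta sum sum_distrib_left mult_ac)
  qed
qed

end
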